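(* Let $S_X,S_Y$ be finite nonempty action sets, $\varphi:S_X\times S_Y\to\mathbb{R}$ and $\lambda\in[0,1]$. If there exists a $(\varphi,\lambda)$-autocratic behavioral strategy for $X$, then for every $\lambda^*\in[\lambda,1]$ there exists a two-point reactive learning strategy for $X$ that is $(\varphi,\lambda^* )$-autocratic.
   Context: Two players $X,Y$ play a repeated game with finite action sets $S_X,S_Y$; $\Delta(S)$ denotes the probability distributions on $S$. $\varphi(\tau_X,s_Y)=\mathbb{E}_{s_X\sim\tau_X}[\varphi(s_X,s_Y)]$. Histories: $\mathcal{H}=\bigcup_{T\ge0}(S_X\times S_Y)^T$; behavioral strategies are maps $\sigma:\mathcal{H}\to\Delta(S)$; players independently draw actions each round from their strategies evaluated at the history of realized action pairs, with $\mathbb{E}_{\sigma_X,\sigma_Y}$ the expectation over the resulting play. For $\lambda\in[0,1)$, $\sigma_X$ is $(\varphi,\lambda)$-autocratic if for every behavioral strategy $\sigma_Y$ of $Y$, $\mathbb{E}_{\sigma_X,\sigma_Y}\big[(1-\lambda)\sum_{t\ge0}\lambda^t\varphi(s_X^t,s_Y^t)\big]=0$; $\sigma_X$ is $(\varphi,1)$-autocratic if for every behavioral strategy $\sigma_Y$ of $Y$ the limit $\lim_{T\to\infty}\frac1{T+1}\sum_{t=0}^T\mathbb{E}_{\sigma_X,\sigma_Y}[\varphi(s_X^t,s_Y^t)]$ exists and equals $0$. A reactive learning strategy $(\sigma_X^0,\sigma_X^* )$, $\sigma_X^0\in\Delta(S_X)$, $\sigma_X^*:\Delta(S_X)\times S_Y\to\Delta(S_X)$,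 plays $\tau_X^0=\sigma_X^0$ in round $0$ and $\tau_X^{t+1}=\sigma_X^*[\tau_X^t,s_Y^t]$ in round $t+1$ ($s_Y^t$ being $Y$'s realized action in round $t$). It is two-point if there exist $\tau_X^\pm\in\Delta(S_X)$, $p_0\in[0,1]$, $p^*:[0,1]\times S_Y\to[0,1]$ with $\sigma_X^0=p_0\tau_X^++(1-p_0)\tau_X^-$ and $\sigma_X^*[p\tau_X^++(1-p)\tau_X^-,s_Y]=p^*[p,s_Y]\tau_X^++(1-p^*[p,s_Y])\tau_X^-$ for all $p\in[0,1]$, $s_Y\in S_Y$. *)

theory Defs
  imports "HOL-Probability.Probability"
begin

text \<open>Histories are lists of realized action pairs in chronological order
  (round 0 first). Behavioral strategies map histories to distributions.\<close>

type_synonym ('x, 'y) history = "('x \<times> 'y) list"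

fun play_pmf :: "(('x, 'y) history \<Rightarrow> 'x pmf) \<Rightarrow> (('x, 'y) history \<Rightarrow> 'y pmf)
                  \<Rightarrow> nat \<Rightarrow> ('x, 'y) history pmf" where
  "play_pmf \<sigma>X \<sigma>Y 0 = return_pmf []"
| "play_pmf \<sigma>X \<sigma>Y (Suc t) =
     bind_pmf (play_pmf \<sigma>X \<sigma>Y t) (\<lambda>h.
     bind_pmf (\<sigma>X h) (\<lambda>a.
     bind_pmf (\<sigma>Y h) (\<lambda>b. return_pmf (h @ [(a, b)]))))"

definition stage_exp :: "('x \<Rightarrow> 'y \<Rightarrow> real) \<Rightarrow> (('x, 'y) history \<Rightarrow> 'x pmf)
                          \<Rightarrow> (('x, 'y) history \<Rightarrow> 'y pmf) \<Rightarrow> nat \<Rightarrow> real" where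
  "stage_exp \<phi> \<sigma>X \<sigma>Y t =
     measure_pmf.expectation (play_pmf \<sigma>X \<sigma>Y (Suc t)) (\<lambda>h. case last h of (a, b) \<Rightarrow> \<phi> a b)"

text \<open>For lambda < 1 the expectation of the
  discounted sum is written as the discounted sum of the stage expectations
  (equal by dominated convergence, since phi is bounded).\<close>
definition autocratic :: "('x \<Rightarrow> 'y \<Rightarrow> real) \<Rightarrow> real \<Rightarrow> (('x, 'y) history \<Rightarrow> 'x pmf) \<Rightarrow> bool" where
  "autocratic \<phi> lam \<sigma>X \<longleftrightarrow>
     (if lam < 1 then
        (\<forall>\<sigma>Y :: ('x, 'y) history \<Rightarrow> 'y pmf.
           (1 - lam) * (\<Sum>t. lam ^ t * stage_exp \<phi> \<sigma>X \<sigma>Y t) = 0)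
      else
        (\<forall>\<sigma>Y :: ('x, 'y) history \<Rightarrow> 'y pmf.
           (\<lambda>T. (\<Sum>t\<le>T. stage_exp \<phi> \<sigma>X \<sigma>Y t) / real (T + 1)) \<longlonglongrightarrow> 0))"

definition reactive_strategy :: "'x pmf \<Rightarrow> ('x pmf \<Rightarrow> 'y \<Rightarrow> 'x pmf) \<Rightarrow> ('x, 'y) history \<Rightarrow> 'x pmf" where
  "reactive_strategy \<sigma>0 \<sigma>s h = foldl (\<lambda>\<tau> ab. \<sigma>s \<tau> (snd ab)) \<sigma>0 h"

definition mix_pmf :: "real \<Rightarrow> 'x pmf \<Rightarrow> 'x pmf \<Rightarrow> 'x pmf" where
  "mix_pmf p \<tau>p \<tau>m = bind_pmf (bernoulli_pmf p) (\<lambda>c. if c then \<tau>p else \<tau>m)"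

definition two_point :: "'x pmf \<Rightarrow> ('x pmf \<Rightarrow> 'y \<Rightarrow> 'x pmf) \<Rightarrow> bool" where
  "two_point \<sigma>0 \<sigma>s \<longleftrightarrow>
     (\<exists>(\<tau>p :: 'x pmf) (\<tau>m :: 'x pmf) (p0 :: real) (ps :: real \<Rightarrow> 'y \<Rightarrow> real).
        p0 \<in> {0..1} \<and> (\<forall>p\<in>{0..1}. \<forall>b. ps p b \<in> {0..1}) \<and>
        \<sigma>0 = mix_pmf p0 \<tau>p \<tau>m \<and>
        (\<forall>p\<in>{0..1}. \<forall>b. \<sigma>s (mix_pmf p \<tau>p \<tau>m) b = mix_pmf (ps p b) \<tau>p \<tau>m))"

end

(*
  For a mixed action tau write u_tau(y) for X's expected payoff against the action y of Y.

  Sufficiency: X's strategy is (phi, lambda)-autocratic as soon as some bounded potential G on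
  histories satisfies G h = E_x[phi(x, y) + lambda G (h (x, y))] for every action y of Y (and
  G [] = 0 if lambda < 1), because the expected discounted (resp. average) payoff then telescopes.

  Necessity: let M and -m be the supremum and infimum of the values of the continuations of a
  (phi, lambda)-autocratic strategy (lambda < 1). Splitting off the first round shows that the
  continuations with values close to M and -m play mixed actions tau+ and tau- which, after a
  compactness argument, satisfy
    (1 - lambda) M <= u_tau+ <= M + lambda m   and   (1 - lambda) m <= - u_tau- <= m + lambda M.
  For lambda = 1 the same bounds (with M = m = sum of all |phi x y|) follow because otherwise
  Y could push every stage payoff below some -epsilon by best-responding.

  These bounds persist when lambda is increased. If they hold, the two-point strategy playing
  p tau+ + (1 - p) tau- with potential G = p M - (1 - p) m is autocratic: solving the potential
  equation for the next weight p* gives a value in [0, 1] precisely by the bounds. In the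
  degenerate case tau+ = tau- or M = m = 0 (and also when lambda = 0), some mixed action is an
  equalizer, u_tau = 0, and playing it forever is autocratic for every discount factor.
*)
theory Submission
  imports Defs
begin

lemma sum_pmf_times_const: "(\<Sum>x\<in>UNIV. pmf p x * c) = (c :: real)"
  for p :: "'a::finite pmf"
  by (simp add: sum_distrib_right[symmetric] sum_pmf_eq_1)

lemma sum_pmf_return_times: "(\<Sum>y\<in>UNIV. pmf (return_pmf y0) y * f y) = (f y0 :: real)"
  for y0 :: "'a::finite"
  by (simp add: indicator_def if_distrib sum.delta)

lemma sum_pmf_swap:
  fixes F :: "'a::finite \<Rightarrow> 'b::finite \<Rightarrow> real"
  shows "(\<Sum>x\<in>UNIV. pmf p x * (\<Sum>y\<in>UNIV. pmf q y * F x y)) =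
    (\<Sum>y\<in>UNIV. pmf q y * (\<Sum>x\<in>UNIV. pmf p x * F x y))"
  by (simp only: sum_distrib_left mult.left_commute, rule sum.swap)

lemma sum_pmf_times_between:
  fixes f :: "'a::finite \<Rightarrow> real"
  assumes "\<And>x. 0 < pmf p x \<Longrightarrow> lo \<le> f x \<and> f x \<le> hi"
  shows "lo \<le> (\<Sum>x\<in>UNIV. pmf p x * f x) \<and> (\<Sum>x\<in>UNIV. pmf p x * f x) \<le> hi"
proof -
  have "pmf p x * lo \<le> pmf p x * f x \<and> pmf p x * f x \<le> pmf p x * hi" for x
    using assms[of x] pmf_nonneg[of p x]
    by (cases "pmf p x = 0") (auto intro: mult_left_mono)
  then have "(\<Sum>x\<in>UNIV. pmf p x * lo) \<le> (\<Sum>x\<in>UNIV. pmf p x * f x)"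
    and "(\<Sum>x\<in>UNIV. pmf p x * f x) \<le> (\<Sum>x\<in>UNIV. pmf p x * hi)"
    by (auto intro: sum_mono)
  then show ?thesis
    by (simp add: sum_pmf_times_const)
qed

lemma expectation_eq_sum_set_pmf:
  fixes f :: "'a \<Rightarrow> real"
  assumes "finite (set_pmf p)"
  shows "measure_pmf.expectation p f = (\<Sum>a\<in>set_pmf p. pmf p a * f a)"
  using assms by (subst integral_measure_pmf_real[of "set_pmf p"]) (auto simp: mult.commute)

lemma sum_set_pmf_eq_sum_UNIV:
  fixes g :: "'a::finite \<Rightarrow> real"
  shows "(\<Sum>a\<in>set_pmf p. pmf p a * g a) = (\<Sum>a\<in>UNIV. pmf p a * g a)"
  by (rule sum.mono_neutral_left) (auto simp: set_pmf_eq)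

lemma expectation_bind_pmf_finite:
  fixes F :: "'b \<Rightarrow> real"
  assumes "finite (set_pmf p)" "\<And>a. a \<in> set_pmf p \<Longrightarrow> finite (set_pmf (f a))"
  shows "measure_pmf.expectation (bind_pmf p f) F =
    (\<Sum>a\<in>set_pmf p. pmf p a * measure_pmf.expectation (f a) F)"
  using pmf_expectation_bind[of "set_pmf p" f p F] assms by simp

lemma expectation_add_scaled:
  fixes f g :: "'a \<Rightarrow> real"
  assumes "finite (set_pmf p)"
  shows "measure_pmf.expectation p f + c * measure_pmf.expectation p g =
    measure_pmf.expectation p (\<lambda>a. f a + c * g a)"
  using assms by (simp add: expectation_eq_sum_set_pmf sum.distrib sum_distrib_left algebra_simps)

lemma abs_expectation_le:
  fixes f :: "'a \<Rightarrow> real"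
  assumes "\<And>a. \<bar>f a\<bar> \<le> B"
  shows "\<bar>measure_pmf.expectation p f\<bar> \<le> B"
proof -
  have "\<bar>measure_pmf.expectation p f\<bar> \<le> measure_pmf.expectation p (\<lambda>a. \<bar>f a\<bar>)"
    by (rule integral_abs_bound)
  also have "\<dots> \<le> B"
    using assms
    by (intro measure_pmf.integral_le_const)
      (auto intro!: measure_pmf.integrable_const_bound[where B=B])
  finally show ?thesis .
qed

section \<open>Stage payoffs\<close>

definition mixed_payoff :: "('x::finite \<Rightarrow> 'y \<Rightarrow> real) \<Rightarrow> 'x pmf \<Rightarrow> 'y \<Rightarrow> real" where
  "mixed_payoff \<phi> \<tau> y = (\<Sum>x\<in>UNIV. pmf \<tau> x * \<phi> x y)"

lemma mixed_payoff_uminus: "mixed_payoff (\<lambda>x y. - \<phi> x y) \<tau> y = - mixed_payoff \<phi> \<tau> y"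
  by (simp add: mixed_payoff_def sum_negf)

definition payoff_bound :: "('x::finite \<Rightarrow> 'y::finite \<Rightarrow> real) \<Rightarrow> real" where
  "payoff_bound \<phi> = (\<Sum>x\<in>UNIV. \<Sum>y\<in>UNIV. \<bar>\<phi> x y\<bar>)"

lemma abs_le_payoff_bound: "\<bar>\<phi> x y\<bar> \<le> payoff_bound \<phi>"
proof -
  have "\<bar>\<phi> x y\<bar> \<le> (\<Sum>y\<in>UNIV. \<bar>\<phi> x y\<bar>)"
    by (rule member_le_sum) auto
  also have "\<dots> \<le> payoff_bound \<phi>"
    unfolding payoff_bound_def by (rule member_le_sum) (auto intro: sum_nonneg)
  finally show ?thesis .
qed

lemma payoff_bound_nonneg: "0 \<le> payoff_bound \<phi>"
  using abs_le_payoff_bound[of \<phi>] abs_ge_zero order_trans by blast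

lemma abs_mixed_payoff_le: "\<bar>mixed_payoff \<phi> \<tau> y\<bar> \<le> payoff_bound \<phi>"
proof -
  have "- payoff_bound \<phi> \<le> \<phi> x y \<and> \<phi> x y \<le> payoff_bound \<phi>" for x
    using abs_le_payoff_bound[of \<phi> x y] by linarith
  then have "- payoff_bound \<phi> \<le> mixed_payoff \<phi> \<tau> y \<and> mixed_payoff \<phi> \<tau> y \<le> payoff_bound \<phi>"
    unfolding mixed_payoff_def by (intro sum_pmf_times_between)
  then show ?thesis
    by linarith
qed

lemma finite_set_play_pmf:
  fixes \<sigma>X :: "('x::finite, 'y::finite) history \<Rightarrow> 'x pmf"
  shows "finite (set_pmf (play_pmf \<sigma>X \<sigma>Y t))"
  by (induction t) (auto simp: set_bind_pmf)

lemma length_of_set_play_pmf: "h \<in> set_pmf (play_pmf \<sigma>X \<sigma>Y t) \<Longrightarrow> length h = t"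
  by (induction t arbitrary: h) (auto simp: set_bind_pmf)

lemma expectation_play_pmf_Suc:
  fixes \<sigma>X :: "('x::finite, 'y::finite) history \<Rightarrow> 'x pmf" and F :: "('x, 'y) history \<Rightarrow> real"
  shows "measure_pmf.expectation (play_pmf \<sigma>X \<sigma>Y (Suc t)) F =
    measure_pmf.expectation (play_pmf \<sigma>X \<sigma>Y t)
      (\<lambda>h. \<Sum>y\<in>UNIV. pmf (\<sigma>Y h) y * (\<Sum>x\<in>UNIV. pmf (\<sigma>X h) x * F (h @ [(x, y)])))"
proof -
  have "measure_pmf.expectation (play_pmf \<sigma>X \<sigma>Y (Suc t)) F =
     (\<Sum>h\<in>set_pmf (play_pmf \<sigma>X \<sigma>Y t). pmf (play_pmf \<sigma>X \<sigma>Y t) h *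
        (\<Sum>x\<in>UNIV. pmf (\<sigma>X h) x * (\<Sum>y\<in>UNIV. pmf (\<sigma>Y h) y * F (h @ [(x, y)]))))"
    by (simp add: expectation_bind_pmf_finite finite_set_play_pmf sum_set_pmf_eq_sum_UNIV)
  also have "\<dots> = measure_pmf.expectation (play_pmf \<sigma>X \<sigma>Y t)
      (\<lambda>h. \<Sum>y\<in>UNIV. pmf (\<sigma>Y h) y * (\<Sum>x\<in>UNIV. pmf (\<sigma>X h) x * F (h @ [(x, y)])))"
    unfolding expectation_eq_sum_set_pmf[OF finite_set_play_pmf]
    by (intro sum.cong refl arg_cong[where f="(*) _"] sum_pmf_swap)
  finally show ?thesis .
qed

lemma stage_exp_eq:
  fixes \<sigma>X :: "('x::finite, 'y::finite) history \<Rightarrow> 'x pmf"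
  shows "stage_exp \<phi> \<sigma>X \<sigma>Y t = measure_pmf.expectation (play_pmf \<sigma>X \<sigma>Y t)
      (\<lambda>h. \<Sum>y\<in>UNIV. pmf (\<sigma>Y h) y * mixed_payoff \<phi> (\<sigma>X h) y)"
  unfolding stage_exp_def mixed_payoff_def by (subst expectation_play_pmf_Suc) simp

lemma stage_exp_uminus: "stage_exp (\<lambda>x y. - \<phi> x y) \<sigma> \<sigma>Y t = - stage_exp \<phi> \<sigma> \<sigma>Y t"
  unfolding stage_exp_def by (simp add: case_prod_beta)

lemma abs_stage_exp_le:
  fixes \<sigma> :: "('x::finite, 'y::finite) history \<Rightarrow> 'x pmf"
  shows "\<bar>stage_exp \<phi> \<sigma> \<sigma>Y t\<bar> \<le> payoff_bound \<phi>"
  unfolding stage_exp_def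
  by (rule abs_expectation_le) (auto simp: abs_le_payoff_bound split: prod.split)

section \<open>Autocratic strategies from potentials\<close>

definition is_potential ::
    "('x::finite \<Rightarrow> 'y \<Rightarrow> real) \<Rightarrow> real \<Rightarrow> (('x, 'y) history \<Rightarrow> 'x pmf)
      \<Rightarrow> (('x, 'y) history \<Rightarrow> real) \<Rightarrow> bool"
  where "is_potential \<phi> l \<sigma> G \<longleftrightarrow>
    (\<forall>h y. (\<Sum>x\<in>UNIV. pmf (\<sigma> h) x * (\<phi> x y + l * G (h @ [(x, y)]))) = G h)"

lemma stage_exp_eq_potential_difference:
  fixes \<sigma> :: "('x::finite, 'y::finite) history \<Rightarrow> 'x pmf"
  assumes potential: "is_potential \<phi> l \<sigma> G"
  shows "stage_exp \<phi> \<sigma> \<sigma>Y t = measure_pmf.expectation (play_pmf \<sigma> \<sigma>Y t) G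
    - l * measure_pmf.expectation (play_pmf \<sigma> \<sigma>Y (Suc t)) G"
proof -
  have one_round: "(\<Sum>y\<in>UNIV. pmf (\<sigma>Y h) y * mixed_payoff \<phi> (\<sigma> h) y)
      + l * (\<Sum>y\<in>UNIV. pmf (\<sigma>Y h) y * (\<Sum>x\<in>UNIV. pmf (\<sigma> h) x * G (h @ [(x, y)]))) = G h" for h
  proof -
    have "(\<Sum>y\<in>UNIV. pmf (\<sigma>Y h) y * mixed_payoff \<phi> (\<sigma> h) y)
        + l * (\<Sum>y\<in>UNIV. pmf (\<sigma>Y h) y * (\<Sum>x\<in>UNIV. pmf (\<sigma> h) x * G (h @ [(x, y)])))
      = (\<Sum>y\<in>UNIV. pmf (\<sigma>Y h) y * (\<Sum>x\<in>UNIV. pmf (\<sigma> h) x * (\<phi> x y + l * G (h @ [(x, y)]))))"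
      by (simp add: mixed_payoff_def sum_distrib_left sum.distrib[symmetric] algebra_simps)
    also have "\<dots> = G h"
      using potential by (simp add: is_potential_def sum_pmf_times_const)
    finally show ?thesis .
  qed
  have "stage_exp \<phi> \<sigma> \<sigma>Y t + l * measure_pmf.expectation (play_pmf \<sigma> \<sigma>Y (Suc t)) G =
      measure_pmf.expectation (play_pmf \<sigma> \<sigma>Y t) G"
    unfolding stage_exp_eq expectation_play_pmf_Suc
    by (simp add: expectation_add_scaled finite_set_play_pmf one_round)
  then show ?thesis by simp
qed

lemma sum_discounted_stage_exp_telescope:
  fixes \<sigma> :: "('x::finite, 'y::finite) history \<Rightarrow> 'x pmf"
  assumes "is_potential \<phi> l \<sigma> G"
  shows "(\<Sum>t<N. l ^ t * stage_exp \<phi> \<sigma> \<sigma>Y t) =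
    G [] - l ^ N * measure_pmf.expectation (play_pmf \<sigma> \<sigma>Y N) G"
proof (induction N)
  case 0
  then show ?case by simp
next
  case (Suc N)
  then show ?case
    by (simp add: stage_exp_eq_potential_difference[OF assms] algebra_simps)
qed

lemma discounted_stage_exp_sums_zero_of_potential:
  fixes \<sigma> :: "('x::finite, 'y::finite) history \<Rightarrow> 'x pmf"
  assumes l: "0 \<le> l" "l < 1"
    and bounded: "\<And>h. \<bar>G h\<bar> \<le> B" and initial: "G [] = 0"
    and potential: "is_potential \<phi> l \<sigma> G"
  shows "(\<lambda>t. l ^ t * stage_exp \<phi> \<sigma> \<sigma>Y t) sums 0"
proof -
  have "(\<lambda>N. l ^ N * measure_pmf.expectation (play_pmf \<sigma> \<sigma>Y N) G) \<longlonglongrightarrow> 0"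
  proof (rule Lim_null_comparison)
    show "\<forall>\<^sub>F N in sequentially.
        norm (l ^ N * measure_pmf.expectation (play_pmf \<sigma> \<sigma>Y N) G) \<le> l ^ N * B"
      using l abs_expectation_le[of G B, OF bounded]
      by (intro always_eventually allI) (simp add: abs_mult mult_left_mono)
    show "(\<lambda>N. l ^ N * B) \<longlonglongrightarrow> 0"
      using l by (intro tendsto_mult_left_zero LIMSEQ_power_zero) auto
  qed
  then have "(\<lambda>N. G [] - l ^ N * measure_pmf.expectation (play_pmf \<sigma> \<sigma>Y N) G) \<longlonglongrightarrow> 0"
    using initial tendsto_minus[of _ 0] by simp
  then show ?thesis
    unfolding sums_def sum_discounted_stage_exp_telescope[OF potential] .
qed

lemma average_stage_exp_tendsto_zero_of_potential:
  fixes \<sigma> :: "('x::finite, 'y::finite) history \<Rightarrow> 'x pmf"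
  assumes bounded: "\<And>h. \<bar>G h\<bar> \<le> B"
    and potential: "is_potential \<phi> 1 \<sigma> G"
  shows "(\<lambda>T. (\<Sum>t\<le>T. stage_exp \<phi> \<sigma> \<sigma>Y t) / real (T + 1)) \<longlonglongrightarrow> 0"
proof (rule Lim_null_comparison)
  have "\<bar>\<Sum>t\<le>T. stage_exp \<phi> \<sigma> \<sigma>Y t\<bar> \<le> 2 * B" for T
    using sum_discounted_stage_exp_telescope[OF potential, of \<sigma>Y "Suc T"] bounded[of "[]"]
      abs_expectation_le[of G B "play_pmf \<sigma> \<sigma>Y (Suc T)", OF bounded]
    by (simp add: lessThan_Suc_atMost del: play_pmf.simps)
  then show "\<forall>\<^sub>F T in sequentially.
      norm ((\<Sum>t\<le>T. stage_exp \<phi> \<sigma> \<sigma>Y t) / real (T + 1)) \<le> 2 * B / real (T + 1)"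
    by (intro always_eventually allI) (simp add: divide_right_mono)
  show "(\<lambda>T. 2 * B / real (T + 1)) \<longlonglongrightarrow> 0"
    using LIMSEQ_Suc[OF lim_const_over_n[of "2 * B"]] by simp
qed

lemma autocratic_of_potential:
  fixes \<sigma> :: "('x::finite, 'y::finite) history \<Rightarrow> 'x pmf"
  assumes l: "0 \<le> l" "l \<le> 1"
    and bounded: "\<And>h. \<bar>G h\<bar> \<le> B"
    and initial: "l < 1 \<Longrightarrow> G [] = 0"
    and potential: "is_potential \<phi> l \<sigma> G"
  shows "autocratic \<phi> l \<sigma>"
proof (cases "l < 1")
  case True
  then show ?thesis
    using discounted_stage_exp_sums_zero_of_potential[OF l(1) True bounded initial potential]
    by (simp add: autocratic_def sums_iff)
next
  case False
  then have "l = 1"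
    using l by simp
  then show ?thesis
    using average_stage_exp_tendsto_zero_of_potential[where G=G, OF bounded] potential
    by (simp add: autocratic_def)
qed

section \<open>Two-point reactive strategies\<close>

lemma pmf_mix_pmf:
  assumes "p \<in> {0..1}"
  shows "pmf (mix_pmf p \<tau>p \<tau>m) x = p * pmf \<tau>p x + (1 - p) * pmf \<tau>m x"
  using assms unfolding mix_pmf_def pmf_bind
  by (subst integral_measure_pmf_real[of UNIV]) (auto simp: UNIV_bool)

lemma mixed_payoff_mix_pmf:
  assumes "p \<in> {0..1}"
  shows "mixed_payoff \<phi> (mix_pmf p \<tau>p \<tau>m) y =
    p * mixed_payoff \<phi> \<tau>p y + (1 - p) * mixed_payoff \<phi> \<tau>m y"
  unfolding mixed_payoff_def pmf_mix_pmf[OF assms]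
  by (simp only: distrib_right sum.distrib sum_distrib_left mult.assoc)

lemma mix_pmf_same: "mix_pmf p \<tau> \<tau> = \<tau>"
  unfolding mix_pmf_def by (simp add: bind_pmf_const)

lemma mix_pmf_inj:
  assumes "\<tau>p \<noteq> \<tau>m" "p \<in> {0..1}" "q \<in> {0..1}" "mix_pmf p \<tau>p \<tau>m = mix_pmf q \<tau>p \<tau>m"
  shows "p = q"
proof -
  obtain x where x: "pmf \<tau>p x \<noteq> pmf \<tau>m x"
    using assms(1) by (metis pmf_eqI)
  have "p * pmf \<tau>p x + (1 - p) * pmf \<tau>m x = q * pmf \<tau>p x + (1 - q) * pmf \<tau>m x"
    using pmf_mix_pmf[OF assms(2), of \<tau>p \<tau>m x] pmf_mix_pmf[OF assms(3), of \<tau>p \<tau>m x] assms(4)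
    by simp
  then have "(p - q) * (pmf \<tau>p x - pmf \<tau>m x) = 0"
    by (simp add: algebra_simps)
  with x show ?thesis by simp
qed

text \<open>Off the segment between \<tau>p and \<tau>m the THE below is unspecified; reactive strategies
  built from this update never leave the segment.\<close>

definition two_point_update :: "'x pmf \<Rightarrow> 'x pmf \<Rightarrow> (real \<Rightarrow> 'y \<Rightarrow> real) \<Rightarrow> 'x pmf \<Rightarrow> 'y \<Rightarrow> 'x pmf" where
  "two_point_update \<tau>p \<tau>m ps \<tau> y = mix_pmf (ps (THE p. p \<in> {0..1} \<and> \<tau> = mix_pmf p \<tau>p \<tau>m) y) \<tau>p \<tau>m"

lemma two_point_update_mix_pmf:
  assumes "\<tau>p \<noteq> \<tau>m" "p \<in> {0..1}"
  shows "two_point_update \<tau>p \<tau>m ps (mix_pmf p \<tau>p \<tau>m) y = mix_pmf (ps p y) \<tau>p \<tau>m"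
proof -
  have "(THE q. q \<in> {0..1} \<and> mix_pmf p \<tau>p \<tau>m = mix_pmf q \<tau>p \<tau>m) = p"
    using assms mix_pmf_inj[OF assms(1)] by (intro the_equality) auto
  then show ?thesis
    unfolding two_point_update_def by simp
qed

lemma two_point_two_point_update:
  assumes "\<tau>p \<noteq> \<tau>m" "p0 \<in> {0..1}" "\<And>p y. p \<in> {0..1} \<Longrightarrow> ps p y \<in> {0..1}"
  shows "two_point (mix_pmf p0 \<tau>p \<tau>m) (two_point_update \<tau>p \<tau>m ps)"
  unfolding two_point_def
  by (rule exI[of _ \<tau>p], rule exI[of _ \<tau>m], rule exI[of _ p0], rule exI[of _ ps])
    (use assms in \<open>auto simp: two_point_update_mix_pmf\<close>)

lemma reactive_strategy_two_point_update:
  assumes "\<tau>p \<noteq> \<tau>m" "p0 \<in> {0..1}" "\<And>p y. p \<in> {0..1} \<Longrightarrow> ps p y \<in> {0..1}"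
  shows "reactive_strategy (mix_pmf p0 \<tau>p \<tau>m) (two_point_update \<tau>p \<tau>m ps) h =
    mix_pmf (foldl (\<lambda>p ab. ps p (snd ab)) p0 h) \<tau>p \<tau>m
    \<and> foldl (\<lambda>p ab. ps p (snd ab)) p0 h \<in> {0..1}"
  using assms
  by (induction h rule: rev_induct) (simp_all add: reactive_strategy_def two_point_update_mix_pmf)

lemma reactive_strategy_const: "reactive_strategy \<tau> (\<lambda>\<tau>' y. \<tau>') h = \<tau>"
  unfolding reactive_strategy_def by (induction h rule: rev_induct) simp_all

lemma two_point_autocratic_of_equalizer:
  fixes \<phi> :: "'x::finite \<Rightarrow> 'y::finite \<Rightarrow> real"
  assumes "\<And>y. mixed_payoff \<phi> \<tau> y = 0" "0 \<le> l" "l \<le> 1"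
  shows "two_point \<tau> (\<lambda>\<tau>' y. \<tau>') \<and> autocratic \<phi> l (reactive_strategy \<tau> (\<lambda>\<tau>' y. \<tau>'))"
proof
  show "two_point \<tau> (\<lambda>\<tau>' y. \<tau>')"
    unfolding two_point_def
    by (rule exI[of _ \<tau>], rule exI[of _ \<tau>], rule exI[of _ 0], rule exI[of _ "\<lambda>_ _. 0"])
      (simp add: mix_pmf_same)
  show "autocratic \<phi> l (reactive_strategy \<tau> (\<lambda>\<tau>' y. \<tau>'))"
    unfolding reactive_strategy_const
    by (rule autocratic_of_potential[where G="\<lambda>h. 0" and B=0])
      (use assms in \<open>simp_all add: mixed_payoff_def is_potential_def\<close>)
qed

definition autocratic_bounds ::
    "('x::finite \<Rightarrow> 'y \<Rightarrow> real) \<Rightarrow> real \<Rightarrow> 'x pmf \<Rightarrow> 'x pmf \<Rightarrow> real \<Rightarrow> real \<Rightarrow> bool" where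
  "autocratic_bounds \<phi> l \<tau>p \<tau>m M m \<longleftrightarrow> 0 \<le> M \<and> 0 \<le> m \<and>
     (\<forall>y. (1 - l) * M \<le> mixed_payoff \<phi> \<tau>p y \<and> mixed_payoff \<phi> \<tau>p y \<le> M + l * m) \<and>
     (\<forall>y. (1 - l) * m \<le> - mixed_payoff \<phi> \<tau>m y \<and> - mixed_payoff \<phi> \<tau>m y \<le> m + l * M)"

lemma autocratic_bounds_mono:
  assumes "autocratic_bounds \<phi> l \<tau>p \<tau>m M m" "l \<le> l'"
  shows "autocratic_bounds \<phi> l' \<tau>p \<tau>m M m"
proof -
  have "(1 - l') * M \<le> (1 - l) * M" "l * m \<le> l' * m" "(1 - l') * m \<le> (1 - l) * m" "l * M \<le> l' * M"
    using assms by (auto simp: autocratic_bounds_def intro: mult_right_mono)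
  with assms(1) show ?thesis
    unfolding autocratic_bounds_def by (meson add_left_mono order_trans)
qed

lemma equalizer_of_autocratic_bounds:
  assumes "autocratic_bounds \<phi> l \<tau>p \<tau>m M m" "l \<le> 1" "M + m = 0 \<or> \<tau>p = \<tau>m"
  shows "mixed_payoff \<phi> \<tau>p y = 0"
proof -
  have bounds: "0 \<le> M" "0 \<le> m" "(1 - l) * M \<le> mixed_payoff \<phi> \<tau>p y"
    "mixed_payoff \<phi> \<tau>p y \<le> M + l * m" "(1 - l) * m \<le> - mixed_payoff \<phi> \<tau>m y"
    using assms(1) by (auto simp: autocratic_bounds_def)
  have "0 \<le> (1 - l) * M" "0 \<le> (1 - l) * m"
    using assms(2) bounds by simp_all
  consider "M = 0" "m = 0" | "\<tau>p = \<tau>m"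
    using assms(3) bounds(1,2) by (metis add_nonneg_eq_0_iff)
  then show ?thesis
  proof cases
    case 1
    then show ?thesis using bounds by simp
  next
    case 2
    then show ?thesis using bounds \<open>0 \<le> (1 - l) * M\<close> \<open>0 \<le> (1 - l) * m\<close> by simp
  qed
qed

lemma two_point_weight_in_unit_interval:
  fixes a b :: real
  assumes l: "0 < l" and nondegenerate: "0 < M + m" and p: "p \<in> {0..1}"
    and a: "(1 - l) * M \<le> a" "a \<le> M + l * m" and b: "(1 - l) * m \<le> - b" "- b \<le> m + l * M"
  shows "(m + (p * M - (1 - p) * m - (p * a + (1 - p) * b)) / l) / (M + m) \<in> {0..1}"
proof -
  have "p * M - (1 - p) * m - (p * a + (1 - p) * b) = p * (M - a) + (1 - p) * (- m - b)"
    by (simp add: algebra_simps)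
  moreover have "p * (M - a) + (1 - p) * (- m - b) \<le> l * M"
    using convex_bound_le[of "M - a" "l * M" "- m - b" p "1 - p"] a b p by (simp add: algebra_simps)
  moreover have "- (p * (M - a) + (1 - p) * (- m - b)) \<le> l * m"
    using convex_bound_le[of "a - M" "l * m" "m + b" p "1 - p"] a b p by (simp add: algebra_simps)
  ultimately have "- m \<le> (p * M - (1 - p) * m - (p * a + (1 - p) * b)) / l"
    and "(p * M - (1 - p) * m - (p * a + (1 - p) * b)) / l \<le> M"
    using l by (simp_all add: field_simps)
  then show ?thesis
    using nondegenerate by (simp add: field_simps)
qed

lemma two_point_weight_solves_potential:
  fixes c l M m :: real
  assumes "0 < l" "0 < M + m"
  shows "l * ((m + c / l) / (M + m) * M - (1 - (m + c / l) / (M + m)) * m) = c"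
proof -
  have "q * M - (1 - q) * m = q * (M + m) - m" for q :: real
    by (simp add: algebra_simps)
  with assms show ?thesis
    by (simp only:) simp
qed

lemma abs_weighted_difference_le:
  fixes M m :: real
  assumes "p \<in> {0..1}" "0 \<le> M" "0 \<le> m"
  shows "\<bar>p * M - (1 - p) * m\<bar> \<le> M + m"
proof -
  have "0 \<le> p * M" "p * M \<le> M" "0 \<le> (1 - p) * m" "(1 - p) * m \<le> m"
    using assms by (simp_all add: mult_left_le_one_le)
  then show ?thesis
    by (simp add: abs_le_iff)
qed

lemma two_point_autocratic_of_bounds:
  fixes \<phi> :: "'x::finite \<Rightarrow> 'y::finite \<Rightarrow> real"
  assumes bounds: "autocratic_bounds \<phi> l \<tau>p \<tau>m M m"
    and distinct: "\<tau>p \<noteq> \<tau>m" and l: "0 < l" "l \<le> 1" and nondegenerate: "0 < M + m"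
  shows "\<exists>\<sigma>0 \<sigma>s. two_point \<sigma>0 \<sigma>s \<and> autocratic \<phi> l (reactive_strategy \<sigma>0 \<sigma>s)"
proof -
  define u where "u p y = p * mixed_payoff \<phi> \<tau>p y + (1 - p) * mixed_payoff \<phi> \<tau>m y" for p y
  define V where "V p = p * M - (1 - p) * m" for p :: real
  define ps where "ps p y = (m + (V p - u p y) / l) / (M + m)" for p y
  define p0 where "p0 = m / (M + m)"
  define pst where "pst h = foldl (\<lambda>p ab. ps p (snd ab)) p0 h" for h :: "('x, 'y) history"
  have M: "0 \<le> M" and m: "0 \<le> m"
    using bounds by (simp_all add: autocratic_bounds_def)
  have V_ps: "l * V (ps p y) = V p - u p y" for p y
    unfolding ps_def V_def[of "(m + _ / l) / (M + m)"]
    by (rule two_point_weight_solves_potential[OF l(1) nondegenerate])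
  have ps_range: "ps p y \<in> {0..1}" if "p \<in> {0..1}" for p y
    using two_point_weight_in_unit_interval[OF l(1) nondegenerate that] bounds
    by (simp add: ps_def V_def u_def autocratic_bounds_def)
  have p0: "p0 \<in> {0..1}"
    using M m nondegenerate by (simp add: p0_def field_simps)
  have strategy: "reactive_strategy (mix_pmf p0 \<tau>p \<tau>m) (two_point_update \<tau>p \<tau>m ps) h =
      mix_pmf (pst h) \<tau>p \<tau>m" and pst_range: "pst h \<in> {0..1}" for h
    using reactive_strategy_two_point_update[where ps=ps, OF distinct p0 ps_range]
    unfolding pst_def by blast+
  have "autocratic \<phi> l (\<lambda>h. mix_pmf (pst h) \<tau>p \<tau>m)"
  proof (rule autocratic_of_potential[where G="\<lambda>h. V (pst h)" and B="M + m"])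
    show "\<bar>V (pst h)\<bar> \<le> M + m" for h
      unfolding V_def by (rule abs_weighted_difference_le[OF pst_range M m])
    show "V (pst []) = 0"
      using nondegenerate by (simp add: pst_def p0_def V_def field_simps)
    show "is_potential \<phi> l (\<lambda>h. mix_pmf (pst h) \<tau>p \<tau>m) (\<lambda>h. V (pst h))"
      using pst_range
      by (simp add: is_potential_def pst_def sum.distrib distrib_left sum_pmf_times_const
          mixed_payoff_def[symmetric] mixed_payoff_mix_pmf u_def[symmetric] V_ps)
  qed (use l in auto)
  moreover have "reactive_strategy (mix_pmf p0 \<tau>p \<tau>m) (two_point_update \<tau>p \<tau>m ps) =
      (\<lambda>h. mix_pmf (pst h) \<tau>p \<tau>m)"
    using strategy by blast
  ultimately show ?thesis
    using two_point_two_point_update[where ps=ps, OF distinct p0 ps_range] by metis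
qed

section \<open>Discounted values of continuation strategies\<close>

definition continuation :: "(('x, 'y) history \<Rightarrow> 'a) \<Rightarrow> 'x \<times> 'y \<Rightarrow> ('x, 'y) history \<Rightarrow> 'a" where
  "continuation \<sigma> xy h = \<sigma> (xy # h)"

lemma play_pmf_Suc_first_round:
  "play_pmf \<sigma> \<sigma>Y (Suc t) = bind_pmf (\<sigma> []) (\<lambda>x. bind_pmf (\<sigma>Y []) (\<lambda>y.
      map_pmf ((#) (x, y)) (play_pmf (continuation \<sigma> (x, y)) (continuation \<sigma>Y (x, y)) t)))"
proof (induction t)
  case 0
  then show ?case by (simp add: bind_return_pmf)
next
  case (Suc t)
  show ?case
    by (subst play_pmf.simps(2), subst Suc)
      (simp add: bind_assoc_pmf map_bind_pmf bind_map_pmf bind_return_pmf continuation_def)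
qed

lemma stage_exp_Suc:
  fixes \<sigma> :: "('x::finite, 'y::finite) history \<Rightarrow> 'x pmf"
  shows "stage_exp \<phi> \<sigma> \<sigma>Y (Suc t) = (\<Sum>y\<in>UNIV. pmf (\<sigma>Y []) y * (\<Sum>x\<in>UNIV. pmf (\<sigma> []) x *
    stage_exp \<phi> (continuation \<sigma> (x, y)) (continuation \<sigma>Y (x, y)) t))"
proof -
  let ?play = "\<lambda>x y. play_pmf (continuation \<sigma> (x, y)) (continuation \<sigma>Y (x, y)) (Suc t)"
  let ?payoff = "\<lambda>h. case last h of (a, b) \<Rightarrow> \<phi> a b"
  have continued: "measure_pmf.expectation (map_pmf ((#) (x, y)) (?play x y)) ?payoff =
      stage_exp \<phi> (continuation \<sigma> (x, y)) (continuation \<sigma>Y (x, y)) t" for x y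
  proof -
    have "measure_pmf.expectation (map_pmf ((#) (x, y)) (?play x y)) ?payoff =
        measure_pmf.expectation (?play x y) (\<lambda>h. ?payoff ((x, y) # h))"
      by simp
    also have "\<dots> = measure_pmf.expectation (?play x y) ?payoff"
      unfolding expectation_eq_sum_set_pmf[OF finite_set_play_pmf]
      by (intro sum.cong refl) (auto dest!: length_of_set_play_pmf)
    finally show ?thesis
      by (simp only: stage_exp_def)
  qed
  have "stage_exp \<phi> \<sigma> \<sigma>Y (Suc t) = (\<Sum>x\<in>UNIV. pmf (\<sigma> []) x * (\<Sum>y\<in>UNIV. pmf (\<sigma>Y []) y *
      measure_pmf.expectation (map_pmf ((#) (x, y)) (?play x y)) ?payoff))"
    unfolding stage_exp_def[of \<phi> \<sigma>] play_pmf_Suc_first_round[of \<sigma> \<sigma>Y "Suc t"]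
    by (simp add: expectation_bind_pmf_finite finite_set_play_pmf sum_set_pmf_eq_sum_UNIV
        del: play_pmf.simps)
  also have "\<dots> = (\<Sum>y\<in>UNIV. pmf (\<sigma>Y []) y * (\<Sum>x\<in>UNIV. pmf (\<sigma> []) x *
      measure_pmf.expectation (map_pmf ((#) (x, y)) (?play x y)) ?payoff))"
    by (rule sum_pmf_swap)
  finally show ?thesis
    by (simp only: continued)
qed

definition discounted_value ::
    "('x::finite \<Rightarrow> 'y::finite \<Rightarrow> real) \<Rightarrow> real \<Rightarrow> (('x, 'y) history \<Rightarrow> 'x pmf)
      \<Rightarrow> (('x, 'y) history \<Rightarrow> 'y pmf) \<Rightarrow> real" where
  "discounted_value \<phi> l \<sigma> \<sigma>Y = (\<Sum>t. l ^ t * stage_exp \<phi> \<sigma> \<sigma>Y t)"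

lemma discounted_stage_exp_le:
  fixes \<sigma> :: "('x::finite, 'y::finite) history \<Rightarrow> 'x pmf"
  assumes "0 \<le> l"
  shows "norm (l ^ t * stage_exp \<phi> \<sigma> \<sigma>Y t) \<le> payoff_bound \<phi> * l ^ t"
  using mult_left_mono[OF abs_stage_exp_le[of \<phi> \<sigma> \<sigma>Y t], of "l ^ t"] assms
  by (simp add: abs_mult mult.commute)

lemma summable_geometric_payoff_bound:
  "0 \<le> l \<Longrightarrow> l < 1 \<Longrightarrow> summable (\<lambda>t. payoff_bound \<phi> * l ^ t)"
  by (simp add: summable_geometric)

lemma summable_abs_discounted_stage_exp:
  fixes \<sigma> :: "('x::finite, 'y::finite) history \<Rightarrow> 'x pmf"
  assumes "0 \<le> l" "l < 1"
  shows "summable (\<lambda>t. \<bar>l ^ t * stage_exp \<phi> \<sigma> \<sigma>Y t\<bar>)"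
  by (rule summable_comparison_test'[OF summable_geometric_payoff_bound[OF assms]])
    (use discounted_stage_exp_le[OF assms(1)] in simp)

lemma summable_discounted_stage_exp:
  fixes \<sigma> :: "('x::finite, 'y::finite) history \<Rightarrow> 'x pmf"
  assumes "0 \<le> l" "l < 1"
  shows "summable (\<lambda>t. l ^ t * stage_exp \<phi> \<sigma> \<sigma>Y t)"
  using summable_abs_discounted_stage_exp[OF assms] by (rule summable_rabs_cancel)

lemma abs_discounted_value_le:
  fixes \<sigma> :: "('x::finite, 'y::finite) history \<Rightarrow> 'x pmf"
  assumes "0 \<le> l" "l < 1"
  shows "\<bar>discounted_value \<phi> l \<sigma> \<sigma>Y\<bar> \<le> payoff_bound \<phi> / (1 - l)"
proof -
  have "\<bar>discounted_value \<phi> l \<sigma> \<sigma>Y\<bar> \<le> (\<Sum>t. \<bar>l ^ t * stage_exp \<phi> \<sigma> \<sigma>Y t\<bar>)"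
    unfolding discounted_value_def
    by (rule summable_rabs[OF summable_abs_discounted_stage_exp[OF assms]])
  also have "\<dots> \<le> (\<Sum>t. payoff_bound \<phi> * l ^ t)"
    using discounted_stage_exp_le[OF assms(1)]
    by (intro suminf_le summable_abs_discounted_stage_exp summable_geometric_payoff_bound assms)
      simp
  also have "\<dots> = payoff_bound \<phi> / (1 - l)"
    using assms by (simp add: suminf_mult suminf_geometric summable_geometric divide_simps)
  finally show ?thesis .
qed

lemma discounted_value_first_round:
  fixes \<sigma> :: "('x::finite, 'y::finite) history \<Rightarrow> 'x pmf"
  assumes l: "0 \<le> l" "l < 1"
  shows "discounted_value \<phi> l \<sigma> \<sigma>Y = (\<Sum>y\<in>UNIV. pmf (\<sigma>Y []) y * (\<Sum>x\<in>UNIV. pmf (\<sigma> []) x *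
    (\<phi> x y + l * discounted_value \<phi> l (continuation \<sigma> (x, y)) (continuation \<sigma>Y (x, y)))))"
proof -
  define f where "f t = l ^ t * stage_exp \<phi> \<sigma> \<sigma>Y t" for t
  have summable: "summable (\<lambda>t. l ^ t * stage_exp \<phi> \<sigma>' \<sigma>Y' t)"
    for \<sigma>' :: "('x, 'y) history \<Rightarrow> 'x pmf" and \<sigma>Y'
    by (rule summable_discounted_stage_exp[OF l])
  have "(\<Sum>t. f (Suc t)) = (\<Sum>t. \<Sum>y\<in>UNIV. pmf (\<sigma>Y []) y * (\<Sum>x\<in>UNIV. pmf (\<sigma> []) x *
      (l * (l ^ t * stage_exp \<phi> (continuation \<sigma> (x, y)) (continuation \<sigma>Y (x, y)) t))))"
    unfolding f_def stage_exp_Suc by (simp add: sum_distrib_left mult_ac)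
  also have "\<dots> = (\<Sum>y\<in>UNIV. pmf (\<sigma>Y []) y * (\<Sum>x\<in>UNIV. pmf (\<sigma> []) x *
      (l * discounted_value \<phi> l (continuation \<sigma> (x, y)) (continuation \<sigma>Y (x, y)))))"
    unfolding discounted_value_def
    by (simp add: suminf_sum summable_sum summable_mult summable suminf_mult)
  finally have "(\<Sum>t. f (Suc t)) = \<dots>" .
  moreover have "discounted_value \<phi> l \<sigma> \<sigma>Y = f 0 + (\<Sum>t. f (Suc t))"
    unfolding discounted_value_def f_def using suminf_split_head[OF summable] by simp
  moreover have "f 0 = (\<Sum>y\<in>UNIV. pmf (\<sigma>Y []) y * (\<Sum>x\<in>UNIV. pmf (\<sigma> []) x * \<phi> x y))"
    by (simp add: f_def stage_exp_eq mixed_payoff_def)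
  ultimately show ?thesis
    by (simp add: sum.distrib distrib_left)
qed

lemma discounted_value_return_pmf:
  fixes \<sigma> :: "('x::finite, 'y::finite) history \<Rightarrow> 'x pmf"
  assumes "0 \<le> l" "l < 1" "\<sigma>Y [] = return_pmf y"
  shows "discounted_value \<phi> l \<sigma> \<sigma>Y = mixed_payoff \<phi> (\<sigma> []) y
    + l * (\<Sum>x\<in>UNIV. pmf (\<sigma> []) x *
        discounted_value \<phi> l (continuation \<sigma> (x, y)) (continuation \<sigma>Y (x, y)))"
proof -
  have "discounted_value \<phi> l \<sigma> \<sigma>Y = (\<Sum>x\<in>UNIV. pmf (\<sigma> []) x *
      (\<phi> x y + l * discounted_value \<phi> l (continuation \<sigma> (x, y)) (continuation \<sigma>Y (x, y))))"
    using discounted_value_first_round[OF assms(1,2), of \<phi> \<sigma> \<sigma>Y]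
    unfolding assms(3) sum_pmf_return_times .
  then show ?thesis
    by (simp add: mixed_payoff_def distrib_left sum.distrib sum_distrib_left mult.left_commute)
qed

definition value_independent ::
    "('x::finite \<Rightarrow> 'y::finite \<Rightarrow> real) \<Rightarrow> real \<Rightarrow> (('x, 'y) history \<Rightarrow> 'x pmf) \<Rightarrow> bool" where
  "value_independent \<phi> l \<sigma> \<longleftrightarrow> (\<forall>\<sigma>Y \<sigma>Y'. discounted_value \<phi> l \<sigma> \<sigma>Y = discounted_value \<phi> l \<sigma> \<sigma>Y')"

lemma value_independent_continuation:
  fixes \<sigma> :: "('x::finite, 'y::finite) history \<Rightarrow> 'x pmf"
  assumes l: "0 < l" "l < 1" and independent: "value_independent \<phi> l \<sigma>"
    and positive: "0 < pmf (\<sigma> []) x0"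
  shows "value_independent \<phi> l (continuation \<sigma> (x0, y0))"
  unfolding value_independent_def
proof (intro allI)
  fix \<sigma>1 \<sigma>2 :: "('x, 'y) history \<Rightarrow> 'y pmf"
  let ?V = "\<lambda>x \<sigma>Y. discounted_value \<phi> l (continuation \<sigma> (x, y0)) \<sigma>Y"
  \<comment> \<open>Opponents differing only after the first round (x0, y0) change X's value only through
    that branch, which has positive weight.\<close>
  define Y where "Y \<sigma>Y h = (if h = [] then return_pmf y0
      else if hd h = (x0, y0) then \<sigma>Y (tl h) else \<sigma>1 (tl h))"
    for \<sigma>Y :: "('x, 'y) history \<Rightarrow> 'y pmf" and h
  have value_Y: "discounted_value \<phi> l \<sigma> (Y \<sigma>Y) = mixed_payoff \<phi> (\<sigma> []) y0
      + l * (\<Sum>x\<in>UNIV. pmf (\<sigma> []) x * ?V x (if x = x0 then \<sigma>Y else \<sigma>1))" for \<sigma>Y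
  proof -
    have "continuation (Y \<sigma>Y) (x, y0) = (if x = x0 then \<sigma>Y else \<sigma>1)" for x
      by (auto simp: Y_def continuation_def)
    then show ?thesis
      using discounted_value_return_pmf[of l "Y \<sigma>Y" y0 \<phi> \<sigma>] l by (simp add: Y_def)
  qed
  have "0 = discounted_value \<phi> l \<sigma> (Y \<sigma>1) - discounted_value \<phi> l \<sigma> (Y \<sigma>2)"
    using independent unfolding value_independent_def by simp
  also have "\<dots> = l * (\<Sum>x\<in>UNIV. pmf (\<sigma> []) x * (?V x \<sigma>1 - ?V x (if x = x0 then \<sigma>2 else \<sigma>1)))"
    unfolding value_Y by (simp add: sum_subtractf right_diff_distrib)
  also have "\<dots> = l * (\<Sum>x\<in>UNIV. if x = x0 then pmf (\<sigma> []) x0 * (?V x0 \<sigma>1 - ?V x0 \<sigma>2) else 0)"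
    by (intro arg_cong[where f="(*) l"] sum.cong) auto
  also have "\<dots> = l * pmf (\<sigma> []) x0 * (?V x0 \<sigma>1 - ?V x0 \<sigma>2)"
    by simp
  finally show "?V x0 \<sigma>1 = ?V x0 \<sigma>2"
    using l positive by simp
qed

lemma value_independent_first_round:
  fixes \<sigma> :: "('x::finite, 'y::finite) history \<Rightarrow> 'x pmf"
  assumes l: "0 \<le> l" "l < 1" and independent: "value_independent \<phi> l \<sigma>"
  shows "discounted_value \<phi> l \<sigma> \<sigma>Y = mixed_payoff \<phi> (\<sigma> []) y
    + l * (\<Sum>x\<in>UNIV. pmf (\<sigma> []) x * discounted_value \<phi> l (continuation \<sigma> (x, y)) \<sigma>Y')"
proof -
  define Y where "Y h = (if h = [] then return_pmf y else \<sigma>Y' (tl h))" for h :: "('x, 'y) history"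
  have "continuation Y (x, y) = \<sigma>Y'" for x
    by (auto simp: Y_def continuation_def)
  then have "discounted_value \<phi> l \<sigma> Y = mixed_payoff \<phi> (\<sigma> []) y
      + l * (\<Sum>x\<in>UNIV. pmf (\<sigma> []) x * discounted_value \<phi> l (continuation \<sigma> (x, y)) \<sigma>Y')"
    using discounted_value_return_pmf[OF l, of Y y \<phi> \<sigma>] by (simp add: Y_def)
  moreover have "discounted_value \<phi> l \<sigma> \<sigma>Y = discounted_value \<phi> l \<sigma> Y"
    using independent unfolding value_independent_def by blast
  ultimately show ?thesis by simp
qed

inductive_set reachable_continuations ::
    "(('x, 'y) history \<Rightarrow> 'x pmf) \<Rightarrow> (('x, 'y) history \<Rightarrow> 'x pmf) set" for \<sigma>X where
  initial: "\<sigma>X \<in> reachable_continuations \<sigma>X"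
| continuation: "\<sigma> \<in> reachable_continuations \<sigma>X \<Longrightarrow> 0 < pmf (\<sigma> []) x \<Longrightarrow>
    continuation \<sigma> (x, y) \<in> reachable_continuations \<sigma>X"

lemma value_independent_reachable:
  fixes \<sigma>X :: "('x::finite, 'y::finite) history \<Rightarrow> 'x pmf"
  assumes "0 < l" "l < 1" "value_independent \<phi> l \<sigma>X" "\<sigma> \<in> reachable_continuations \<sigma>X"
  shows "value_independent \<phi> l \<sigma>"
  using assms(4) by induction (use assms(1-3) value_independent_continuation in auto)

section \<open>Bounds from autocratic strategies\<close>

lemma pmf_subseq_convergent:
  fixes T :: "nat \<Rightarrow> 'x::finite pmf"
  obtains \<tau> r where "strict_mono r" "\<And>x. (\<lambda>n. pmf (T (r n)) x) \<longlonglongrightarrow> pmf \<tau> x"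
proof -
  define v where "v n = (\<chi> x. pmf (T n) x)" for n
  have "norm (v n) \<le> 1" for n
  proof -
    have "norm (v n) \<le> (\<Sum>x\<in>UNIV. \<bar>v n $ x\<bar>)"
      by (rule norm_le_l1_cart)
    also have "\<dots> = 1"
      by (simp add: v_def sum_pmf_eq_1)
    finally show ?thesis .
  qed
  then obtain w r where r: "strict_mono r" and lim: "(v \<circ> r) \<longlonglongrightarrow> w"
    using seq_compactE[OF compact_imp_seq_compact[OF compact_cball], of v 0 1]
    by (metis mem_cball_0)
  have lim_pmf: "(\<lambda>n. pmf (T (r n)) x) \<longlonglongrightarrow> w $ x" for x
    using tendsto_vec_nth[OF lim, of x] by (simp add: v_def o_def)
  have nonneg: "0 \<le> w $ x" for x
    by (rule LIMSEQ_le_const[OF lim_pmf]) simp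
  have "(\<lambda>n. \<Sum>x\<in>UNIV. pmf (T (r n)) x) \<longlonglongrightarrow> (\<Sum>x\<in>UNIV. w $ x)"
    by (intro tendsto_sum lim_pmf)
  then have "(\<Sum>x\<in>UNIV. w $ x) = 1"
    by (simp add: sum_pmf_eq_1 LIMSEQ_const_iff)
  then have "(\<integral>\<^sup>+x. ennreal (w $ x) \<partial>count_space UNIV) = 1"
    using nonneg by (simp add: nn_integral_count_space_finite)
  then have "pmf (embed_pmf (\<lambda>x. w $ x)) x = w $ x" for x
    by (rule pmf_embed_pmf[OF nonneg])
  with r lim_pmf show ?thesis
    using that by metis
qed

lemma mixed_payoff_bounds_attained:
  fixes \<phi> :: "'x::finite \<Rightarrow> 'y \<Rightarrow> real"
  assumes "\<And>\<epsilon>. \<epsilon> > 0 \<Longrightarrow> \<exists>\<tau>. \<forall>y. L y - \<epsilon> \<le> mixed_payoff \<phi> \<tau> y \<and> mixed_payoff \<phi> \<tau> y \<le> U y + \<epsilon>"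
  shows "\<exists>\<tau>. \<forall>y. L y \<le> mixed_payoff \<phi> \<tau> y \<and> mixed_payoff \<phi> \<tau> y \<le> U y"
proof -
  obtain T where T: "\<And>n y. L y - 1 / Suc n \<le> mixed_payoff \<phi> (T n) y
      \<and> mixed_payoff \<phi> (T n) y \<le> U y + 1 / Suc n"
    using assms[of "1 / Suc _"] by (metis of_nat_0_less_iff zero_less_Suc zero_less_divide_1_iff)
  obtain \<tau> r where r: "strict_mono r" and lim: "\<And>x. (\<lambda>n. pmf (T (r n)) x) \<longlonglongrightarrow> pmf \<tau> x"
    using pmf_subseq_convergent[of T] by blast
  have "L y \<le> mixed_payoff \<phi> \<tau> y \<and> mixed_payoff \<phi> \<tau> y \<le> U y" for y
  proof -
    have payoff: "(\<lambda>n. mixed_payoff \<phi> (T (r n)) y) \<longlonglongrightarrow> mixed_payoff \<phi> \<tau> y"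
      unfolding mixed_payoff_def by (intro tendsto_intros lim)
    have "(\<lambda>n. 1 / real (Suc (r n))) \<longlonglongrightarrow> 0"
      using LIMSEQ_subseq_LIMSEQ[OF lim_1_over_n[THEN LIMSEQ_Suc] r] by (simp add: o_def)
    then have lower: "(\<lambda>n. L y - 1 / real (Suc (r n))) \<longlonglongrightarrow> L y"
      and upper: "(\<lambda>n. U y + 1 / real (Suc (r n))) \<longlonglongrightarrow> U y"
      using tendsto_diff[OF tendsto_const] tendsto_add[OF tendsto_const] by fastforce+
    show ?thesis
      using LIMSEQ_le[OF lower payoff] LIMSEQ_le[OF payoff upper] T by blast
  qed
  then show ?thesis by blast
qed

lemma autocratic_bounds_of_approx:
  fixes \<phi> :: "'x::finite \<Rightarrow> 'y \<Rightarrow> real"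
  assumes "0 \<le> M" "0 \<le> m"
    and plus: "\<And>\<epsilon>. \<epsilon> > 0 \<Longrightarrow> \<exists>\<tau>. \<forall>y. (1 - l) * M - \<epsilon> \<le> mixed_payoff \<phi> \<tau> y
      \<and> mixed_payoff \<phi> \<tau> y \<le> M + l * m + \<epsilon>"
    and minus: "\<And>\<epsilon>. \<epsilon> > 0 \<Longrightarrow> \<exists>\<tau>. \<forall>y. (1 - l) * m - \<epsilon> \<le> - mixed_payoff \<phi> \<tau> y
      \<and> - mixed_payoff \<phi> \<tau> y \<le> m + l * M + \<epsilon>"
  shows "\<exists>\<tau>p \<tau>m. autocratic_bounds \<phi> l \<tau>p \<tau>m M m"
proof -
  obtain \<tau>p where "\<forall>y. (1 - l) * M \<le> mixed_payoff \<phi> \<tau>p y \<and> mixed_payoff \<phi> \<tau>p y \<le> M + l * m"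
    using mixed_payoff_bounds_attained[OF plus] by blast
  moreover obtain \<tau>m
    where "\<forall>y. (1 - l) * m \<le> - mixed_payoff \<phi> \<tau>m y \<and> - mixed_payoff \<phi> \<tau>m y \<le> m + l * M"
    using mixed_payoff_bounds_attained[of "\<lambda>_. (1 - l) * m" "\<lambda>x y. - \<phi> x y" "\<lambda>_. m + l * M"] minus
    unfolding mixed_payoff_uminus by blast
  ultimately show ?thesis
    using assms(1,2) unfolding autocratic_bounds_def by blast
qed

lemma mixed_payoff_bounds_reachable:
  fixes \<sigma>X :: "('x::finite, 'y::finite) history \<Rightarrow> 'x pmf"
  assumes l: "0 < l" "l < 1" and independent: "value_independent \<phi> l \<sigma>X"
    and reachable: "\<sigma> \<in> reachable_continuations \<sigma>X"
    and range: "\<And>\<sigma>' \<sigma>Y'. \<sigma>' \<in> reachable_continuations \<sigma>X \<Longrightarrow>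
      lo \<le> discounted_value \<phi> l \<sigma>' \<sigma>Y' \<and> discounted_value \<phi> l \<sigma>' \<sigma>Y' \<le> hi"
  shows "discounted_value \<phi> l \<sigma> \<sigma>Y - l * hi \<le> mixed_payoff \<phi> (\<sigma> []) y
    \<and> mixed_payoff \<phi> (\<sigma> []) y \<le> discounted_value \<phi> l \<sigma> \<sigma>Y - l * lo"
proof -
  define S where "S = (\<Sum>x\<in>UNIV. pmf (\<sigma> []) x * discounted_value \<phi> l (continuation \<sigma> (x, y)) \<sigma>Y)"
  have "discounted_value \<phi> l \<sigma> \<sigma>Y = mixed_payoff \<phi> (\<sigma> []) y + l * S"
    unfolding S_def using l value_independent_reachable[OF l independent reachable]
    by (intro value_independent_first_round) auto
  moreover have "lo \<le> S \<and> S \<le> hi"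
    unfolding S_def using range reachable_continuations.continuation[OF reachable]
    by (intro sum_pmf_times_between) blast
  then have "l * lo \<le> l * S" "l * S \<le> l * hi"
    using l by (simp_all add: mult_left_mono)
  ultimately show ?thesis by simp
qed

lemma autocratic_bounds_of_reachable_values:
  fixes \<sigma>X :: "('x::finite, 'y::finite) history \<Rightarrow> 'x pmf"
  assumes l: "0 < l" "l < 1" and independent: "value_independent \<phi> l \<sigma>X"
    and nonneg: "0 \<le> M" "0 \<le> m"
    and range: "\<And>\<sigma> \<sigma>Y. \<sigma> \<in> reachable_continuations \<sigma>X \<Longrightarrow>
      - m \<le> discounted_value \<phi> l \<sigma> \<sigma>Y \<and> discounted_value \<phi> l \<sigma> \<sigma>Y \<le> M"
    and near_sup: "\<And>\<epsilon>. \<epsilon> > 0 \<Longrightarrow>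
      \<exists>\<sigma>\<in>reachable_continuations \<sigma>X. \<exists>\<sigma>Y. M - \<epsilon> < discounted_value \<phi> l \<sigma> \<sigma>Y"
    and near_inf: "\<And>\<epsilon>. \<epsilon> > 0 \<Longrightarrow>
      \<exists>\<sigma>\<in>reachable_continuations \<sigma>X. \<exists>\<sigma>Y. discounted_value \<phi> l \<sigma> \<sigma>Y < - m + \<epsilon>"
  shows "\<exists>\<tau>p \<tau>m. autocratic_bounds \<phi> l \<tau>p \<tau>m M m"
proof (rule autocratic_bounds_of_approx[OF nonneg])
  note payoff_bounds = mixed_payoff_bounds_reachable[OF l independent _ range]
  fix \<epsilon> :: real
  assume "\<epsilon> > 0"
  obtain \<sigma> \<sigma>Y where reachable: "\<sigma> \<in> reachable_continuations \<sigma>X"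
    and near: "M - \<epsilon> < discounted_value \<phi> l \<sigma> \<sigma>Y"
    using near_sup[OF \<open>\<epsilon> > 0\<close>] by blast
  show "\<exists>\<tau>. \<forall>y. (1 - l) * M - \<epsilon> \<le> mixed_payoff \<phi> \<tau> y \<and> mixed_payoff \<phi> \<tau> y \<le> M + l * m + \<epsilon>"
  proof (intro exI allI)
    fix y
    show "(1 - l) * M - \<epsilon> \<le> mixed_payoff \<phi> (\<sigma> []) y \<and> mixed_payoff \<phi> (\<sigma> []) y \<le> M + l * m + \<epsilon>"
      using payoff_bounds[OF reachable, of \<sigma>Y y] range[OF reachable, of \<sigma>Y] near \<open>\<epsilon> > 0\<close>
      by (simp add: algebra_simps)
  qed
  obtain \<sigma>' \<sigma>Y' where reachable': "\<sigma>' \<in> reachable_continuations \<sigma>X"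
    and near': "discounted_value \<phi> l \<sigma>' \<sigma>Y' < - m + \<epsilon>"
    using near_inf[OF \<open>\<epsilon> > 0\<close>] by blast
  show "\<exists>\<tau>. \<forall>y. (1 - l) * m - \<epsilon> \<le> - mixed_payoff \<phi> \<tau> y \<and> - mixed_payoff \<phi> \<tau> y \<le> m + l * M + \<epsilon>"
  proof (intro exI allI)
    fix y
    show "(1 - l) * m - \<epsilon> \<le> - mixed_payoff \<phi> (\<sigma>' []) y \<and> - mixed_payoff \<phi> (\<sigma>' []) y \<le> m + l * M + \<epsilon>"
      using payoff_bounds[OF reachable', of \<sigma>Y' y] range[OF reachable', of \<sigma>Y'] near' \<open>\<epsilon> > 0\<close>
      by (simp add: algebra_simps)
  qed
qed

lemma bdd_discounted_values:
  fixes \<phi> :: "'x::finite \<Rightarrow> 'y::finite \<Rightarrow> real"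
  assumes "0 \<le> l" "l < 1"
  shows "bdd_above {discounted_value \<phi> l \<sigma> \<sigma>Y | \<sigma> \<sigma>Y. P \<sigma>}"
    and "bdd_below {discounted_value \<phi> l \<sigma> \<sigma>Y | \<sigma> \<sigma>Y. P \<sigma>}"
  using abs_discounted_value_le[OF assms, of \<phi>] unfolding abs_le_iff
  by (auto intro!: bdd_aboveI[where M="payoff_bound \<phi> / (1 - l)"]
      bdd_belowI[where m="- (payoff_bound \<phi> / (1 - l))"] simp: minus_le_iff)

lemma autocratic_bounds_of_discounted_value_zero:
  fixes \<sigma>X :: "('x::finite, 'y::finite) history \<Rightarrow> 'x pmf"
  assumes l: "0 < l" "l < 1" and zero: "\<And>\<sigma>Y. discounted_value \<phi> l \<sigma>X \<sigma>Y = 0"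
  shows "\<exists>\<tau>p \<tau>m M m. autocratic_bounds \<phi> l \<tau>p \<tau>m M m"
proof -
  define W where "W = {discounted_value \<phi> l \<sigma> \<sigma>Y | \<sigma> \<sigma>Y. \<sigma> \<in> reachable_continuations \<sigma>X}"
  have W_zero: "0 \<in> W"
    using zero[of undefined, symmetric] reachable_continuations.initial unfolding W_def by blast
  have bdd: "bdd_above W" "bdd_below W"
    using bdd_discounted_values[of l \<phi> "\<lambda>\<sigma>. \<sigma> \<in> reachable_continuations \<sigma>X"] l
    unfolding W_def by auto
  have "\<exists>\<tau>p \<tau>m. autocratic_bounds \<phi> l \<tau>p \<tau>m (Sup W) (- Inf W)"
  proof (rule autocratic_bounds_of_reachable_values[OF l])
    show "value_independent \<phi> l \<sigma>X"
      using zero by (simp add: value_independent_def)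
    show "0 \<le> Sup W" "0 \<le> - Inf W"
      using W_zero cSup_upper[OF _ bdd(1)] cInf_lower[OF _ bdd(2)] by auto
    show "- (- Inf W) \<le> discounted_value \<phi> l \<sigma> \<sigma>Y \<and> discounted_value \<phi> l \<sigma> \<sigma>Y \<le> Sup W"
      if "\<sigma> \<in> reachable_continuations \<sigma>X" for \<sigma> \<sigma>Y
      using that cSup_upper[OF _ bdd(1)] cInf_lower[OF _ bdd(2)] unfolding W_def by auto
    show "\<exists>\<sigma>\<in>reachable_continuations \<sigma>X. \<exists>\<sigma>Y. Sup W - \<epsilon> < discounted_value \<phi> l \<sigma> \<sigma>Y"
      if "\<epsilon> > 0" for \<epsilon>
      using less_cSup_iff[OF _ bdd(1), of "Sup W - \<epsilon>"] W_zero that unfolding W_def by force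
    show "\<exists>\<sigma>\<in>reachable_continuations \<sigma>X. \<exists>\<sigma>Y. discounted_value \<phi> l \<sigma> \<sigma>Y < - (- Inf W) + \<epsilon>"
      if "\<epsilon> > 0" for \<epsilon>
      using cInf_less_iff[OF _ bdd(2), of "Inf W + \<epsilon>"] W_zero that unfolding W_def by force
  qed
  then show ?thesis by blast
qed

lemma almost_nonneg_mixed_payoff_of_average_zero:
  fixes \<sigma>X :: "('x::finite, 'y::finite) history \<Rightarrow> 'x pmf"
  assumes average: "\<And>\<sigma>Y. (\<lambda>T. (\<Sum>t\<le>T. stage_exp \<phi> \<sigma>X \<sigma>Y t) / real (T + 1)) \<longlonglongrightarrow> 0"
    and "\<epsilon> > 0"
  shows "\<exists>\<tau>. \<forall>y. - \<epsilon> \<le> mixed_payoff \<phi> \<tau> y"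
proof (rule ccontr)
  assume "\<not> ?thesis"
  then have "\<exists>y. mixed_payoff \<phi> \<tau> y < - \<epsilon>" for \<tau>
    by (simp add: not_le)
  then obtain b where b: "\<And>\<tau>. mixed_payoff \<phi> \<tau> (b \<tau>) < - \<epsilon>"
    by metis
  \<comment> \<open>Y best-responds to X's current mixed action, so every stage costs at least \<epsilon>.\<close>
  define Y :: "('x, 'y) history \<Rightarrow> 'y pmf" where "Y h = return_pmf (b (\<sigma>X h))" for h
  have "stage_exp \<phi> \<sigma>X Y t =
      measure_pmf.expectation (play_pmf \<sigma>X Y t) (\<lambda>h. mixed_payoff \<phi> (\<sigma>X h) (b (\<sigma>X h)))"
    for t unfolding stage_exp_eq Y_def sum_pmf_return_times ..
  also have "\<dots> t \<le> - \<epsilon>" for t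
    using b less_imp_le
    by (intro measure_pmf.integral_le_const integrable_measure_pmf_finite finite_set_play_pmf) auto
  finally have "(\<Sum>t\<le>T. stage_exp \<phi> \<sigma>X Y t) / real (T + 1) \<le> - \<epsilon>" for T
    using sum_mono[of "{..T}" "stage_exp \<phi> \<sigma>X Y" "\<lambda>_. - \<epsilon>"] by (simp add: field_simps)
  then have "0 \<le> - \<epsilon>"
    by (intro LIMSEQ_le_const2[OF average[of Y]]) auto
  with \<open>\<epsilon> > 0\<close> show False by simp
qed

lemma autocratic_bounds_of_average_zero:
  fixes \<sigma>X :: "('x::finite, 'y::finite) history \<Rightarrow> 'x pmf"
  assumes average: "\<And>\<sigma>Y. (\<lambda>T. (\<Sum>t\<le>T. stage_exp \<phi> \<sigma>X \<sigma>Y t) / real (T + 1)) \<longlonglongrightarrow> 0"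
  shows "\<exists>\<tau>p \<tau>m. autocratic_bounds \<phi> 1 \<tau>p \<tau>m (payoff_bound \<phi>) (payoff_bound \<phi>)"
proof (rule autocratic_bounds_of_approx)
  have average_uminus:
    "(\<lambda>T. (\<Sum>t\<le>T. stage_exp (\<lambda>x y. - \<phi> x y) \<sigma>X \<sigma>Y t) / real (T + 1)) \<longlonglongrightarrow> 0" for \<sigma>Y
    using tendsto_minus[OF average] by (simp add: stage_exp_uminus sum_negf)
  show "0 \<le> payoff_bound \<phi>" "0 \<le> payoff_bound \<phi>"
    by (fact payoff_bound_nonneg)+
  fix \<epsilon> :: real
  assume "\<epsilon> > 0"
  obtain \<tau>p where \<tau>p: "\<And>y. - \<epsilon> \<le> mixed_payoff \<phi> \<tau>p y"
    using almost_nonneg_mixed_payoff_of_average_zero[OF average \<open>\<epsilon> > 0\<close>] by blast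
  have "- \<epsilon> \<le> mixed_payoff \<phi> \<tau>p y \<and> mixed_payoff \<phi> \<tau>p y \<le> 2 * payoff_bound \<phi> + \<epsilon>" for y
    using \<tau>p[of y] abs_mixed_payoff_le[of \<phi> \<tau>p y] payoff_bound_nonneg[of \<phi>] \<open>\<epsilon> > 0\<close> by linarith
  then show "\<exists>\<tau>. \<forall>y. (1 - 1) * payoff_bound \<phi> - \<epsilon> \<le> mixed_payoff \<phi> \<tau> y
      \<and> mixed_payoff \<phi> \<tau> y \<le> payoff_bound \<phi> + 1 * payoff_bound \<phi> + \<epsilon>"
    by auto
  obtain \<tau>m where \<tau>m: "\<And>y. - \<epsilon> \<le> - mixed_payoff \<phi> \<tau>m y"
    using almost_nonneg_mixed_payoff_of_average_zero[OF average_uminus \<open>\<epsilon> > 0\<close>]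
    unfolding mixed_payoff_uminus by blast
  have "- \<epsilon> \<le> - mixed_payoff \<phi> \<tau>m y \<and> - mixed_payoff \<phi> \<tau>m y \<le> 2 * payoff_bound \<phi> + \<epsilon>" for y
    using \<tau>m[of y] abs_mixed_payoff_le[of \<phi> \<tau>m y] payoff_bound_nonneg[of \<phi>] \<open>\<epsilon> > 0\<close> by linarith
  then show "\<exists>\<tau>. \<forall>y. (1 - 1) * payoff_bound \<phi> - \<epsilon> \<le> - mixed_payoff \<phi> \<tau> y
      \<and> - mixed_payoff \<phi> \<tau> y \<le> payoff_bound \<phi> + 1 * payoff_bound \<phi> + \<epsilon>"
    by auto
qed

lemma autocratic_bounds_of_autocratic:
  fixes \<sigma>X :: "('x::finite, 'y::finite) history \<Rightarrow> 'x pmf"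
  assumes l: "0 < l" "l \<le> 1" and autocratic: "autocratic \<phi> l \<sigma>X"
  shows "\<exists>\<tau>p \<tau>m M m. autocratic_bounds \<phi> l \<tau>p \<tau>m M m"
proof (cases "l < 1")
  case True
  with autocratic have "discounted_value \<phi> l \<sigma>X \<sigma>Y = 0" for \<sigma>Y
    by (simp add: autocratic_def discounted_value_def)
  with l True show ?thesis
    by (intro autocratic_bounds_of_discounted_value_zero) auto
next
  case False
  with l autocratic show ?thesis
    using autocratic_bounds_of_average_zero[of \<phi> \<sigma>X] by (auto simp: autocratic_def)
qed

lemma equalizer_of_autocratic_zero:
  fixes \<sigma>X :: "('x::finite, 'y::finite) history \<Rightarrow> 'x pmf"
  assumes "autocratic \<phi> 0 \<sigma>X"
  shows "mixed_payoff \<phi> (\<sigma>X []) y = 0"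
proof -
  have "stage_exp \<phi> \<sigma>X (\<lambda>_. return_pmf y) 0 = 0"
    using assms powser_zero[of "stage_exp \<phi> \<sigma>X (\<lambda>_. return_pmf y)"]
    by (simp add: autocratic_def mult.commute)
  then show ?thesis
    by (simp add: stage_exp_eq sum_pmf_return_times)
qed

theorem proposition8:
  fixes \<phi> :: "'x::finite \<Rightarrow> 'y::finite \<Rightarrow> real" and lam :: real
  assumes "0 \<le> lam" and "lam \<le> 1"
    and "\<exists>\<sigma>X :: ('x, 'y) history \<Rightarrow> 'x pmf. autocratic \<phi> lam \<sigma>X"
  shows "\<forall>lam'\<in>{lam..1}. \<exists>(\<sigma>0 :: 'x pmf) (\<sigma>s :: 'x pmf \<Rightarrow> 'y \<Rightarrow> 'x pmf).
           two_point \<sigma>0 \<sigma>s \<and> autocratic \<phi> lam' (reactive_strategy \<sigma>0 \<sigma>s)"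
proof (cases "\<exists>\<tau>. \<forall>y. mixed_payoff \<phi> \<tau> y = 0")
  case True
  then show ?thesis
    using two_point_autocratic_of_equalizer assms(1) by fastforce
next
  case no_equalizer: False
  obtain \<sigma>X where autocratic: "autocratic \<phi> lam \<sigma>X"
    using assms(3) by blast
  have "0 < lam"
    using equalizer_of_autocratic_zero[of \<phi> \<sigma>X] autocratic no_equalizer assms(1)
    by (metis order_le_less)
  then obtain \<tau>p \<tau>m M m where bounds: "autocratic_bounds \<phi> lam \<tau>p \<tau>m M m"
    using autocratic_bounds_of_autocratic[OF _ assms(2) autocratic] by blast
  have distinct: "\<tau>p \<noteq> \<tau>m" and "M + m \<noteq> 0"
    using equalizer_of_autocratic_bounds[OF bounds assms(2)] no_equalizer by blast+
  then have nondegenerate: "0 < M + m"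
    using bounds by (simp add: autocratic_bounds_def)
  show ?thesis
  proof
    fix lam' :: real
    assume "lam' \<in> {lam..1}"
    then have "autocratic_bounds \<phi> lam' \<tau>p \<tau>m M m" "0 < lam'" "lam' \<le> 1"
      using autocratic_bounds_mono[OF bounds] \<open>0 < lam\<close> by auto
    then show "\<exists>\<sigma>0 \<sigma>s. two_point \<sigma>0 \<sigma>s \<and> autocratic \<phi> lam' (reactive_strategy \<sigma>0 \<sigma>s)"
      using two_point_autocratic_of_bounds distinct nondegenerate by blast
  qed
qed

end
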